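(* Let $G$ be a bipartite graph with bipartition $(X,Y)$, $|X| = n\geq 2$, $|Y|=m$, every $x\in X$ having degree at least $\delta$. Let $(C,x)$ be a tight pair in $G$, with $C = y_1x_1y_2x_2\ldots y_\ell x_\ell y_1$ where $x_i \in X$, $y_i \in Y$. Let $1\le i<j\le \ell$. If $x_i$ and $x_j$ are not crossing in $C$, then $|N(x_i)\cap V(C)| + |N(x_j)\cap V(C)| \leq |V(C)\cap Y| + 2$.
   Context: A tight pair in $G$ is a pair $(C,x)$ where $C$ is a longest cycle in $G$ and $x \in X \setminus V(C)$, chosen such that $|N(x)\cap V(C)|$ is maximum over all pairs $(C',x')$ with $C'$ a longest cycle and $x' \in X\setminus V(C')$. Indices of $C$ are taken modulo $\ell$; for $1\le a,b\le \ell$, $C[a,b]$ denotes the segment of $C$ traversed in the direction $y_1\to x_1 \to y_2 \to \cdots$ from $y_a$ to $y_b$. For $1\le i<j\le\ell$, $x_i$ and $x_j$ are crossing in $C$ if there are indices $i',j'\in[\ell]$ with $y_{i'}\in N(x_i)$, $y_{j'}\in N(x_j)$, and either (a) $i' = j'+1$ with $i+1\le j'\le j-1$ (so $y_{i'},y_{j'} \in V(C[i+1,j])$), or (b) $j' = i'+1 \pmod \ell$ and $y_{i'},y_{j'}\in V(C[j+1,i])$. *)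

theory Defs
  imports Main
begin

definition bipartite_graph :: "'a set \<Rightarrow> 'a set \<Rightarrow> ('a \<Rightarrow> 'a \<Rightarrow> bool) \<Rightarrow> bool" where
  "bipartite_graph X Y E \<longleftrightarrow> finite X \<and> finite Y \<and> X \<inter> Y = {} \<and>
     (\<forall>u v. E u v \<longrightarrow> E v u) \<and>
     (\<forall>u v. E u v \<longrightarrow> (u \<in> X \<and> v \<in> Y) \<or> (u \<in> Y \<and> v \<in> X))"

definition nbhd :: "('a \<Rightarrow> 'a \<Rightarrow> bool) \<Rightarrow> 'a \<Rightarrow> 'a set" where
  "nbhd E v = {u. E v u}"

definition is_cycle :: "('a \<Rightarrow> 'a \<Rightarrow> bool) \<Rightarrow> 'a list \<Rightarrow> bool" where
  "is_cycle E vs \<longleftrightarrow> length vs \<ge> 3 \<and> distinct vs \<and>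
     (\<forall>k < length vs. E (vs ! k) (vs ! ((k + 1) mod length vs)))"

definition longest_cycle :: "('a \<Rightarrow> 'a \<Rightarrow> bool) \<Rightarrow> 'a list \<Rightarrow> bool" where
  "longest_cycle E C \<longleftrightarrow> is_cycle E C \<and> (\<forall>C'. is_cycle E C' \<longrightarrow> length C' \<le> length C)"

definition tight_pair :: "'a set \<Rightarrow> ('a \<Rightarrow> 'a \<Rightarrow> bool) \<Rightarrow> 'a list \<Rightarrow> 'a \<Rightarrow> bool" where
  "tight_pair X E C x \<longleftrightarrow> longest_cycle E C \<and> x \<in> X - set C \<and>
     (\<forall>C' x'. longest_cycle E C' \<and> x' \<in> X - set C' \<longrightarrow>
        card (nbhd E x' \<inter> set C') \<le> card (nbhd E x \<inter> set C))"

definition cyc_list :: "(nat \<Rightarrow> 'a) \<Rightarrow> (nat \<Rightarrow> 'a) \<Rightarrow> nat \<Rightarrow> 'a list" where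
  "cyc_list ys xs l = concat (map (\<lambda>k. [ys k, xs k]) [1..<l+1])"

text \<open>Indices taken modulo l, represented in [1..l].\<close>
definition cyc_idx :: "nat \<Rightarrow> nat \<Rightarrow> nat" where
  "cyc_idx l k = (k + l - 1) mod l + 1"

text \<open>Indices k of the y_k met going from y_a to y_b in the cycle direction.\<close>
definition cyc_range :: "nat \<Rightarrow> nat \<Rightarrow> nat \<Rightarrow> nat set" where
  "cyc_range l a b = (let a' = cyc_idx l a; b' = cyc_idx l b in
     if a' \<le> b' then {a'..b'} else {a'..l} \<union> {1..b'})"

definition seg_vertices :: "(nat \<Rightarrow> 'a) \<Rightarrow> (nat \<Rightarrow> 'a) \<Rightarrow> nat \<Rightarrow> nat \<Rightarrow> nat \<Rightarrow> 'a set" where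
  "seg_vertices ys xs l a b =
     ys ` cyc_range l a b \<union> xs ` (cyc_range l a b - {cyc_idx l b})"

definition crossing :: "('a \<Rightarrow> 'a \<Rightarrow> bool) \<Rightarrow> (nat \<Rightarrow> 'a) \<Rightarrow> (nat \<Rightarrow> 'a) \<Rightarrow> nat \<Rightarrow> nat \<Rightarrow> nat \<Rightarrow> bool" where
  "crossing E ys xs l i j \<longleftrightarrow>
     (\<exists>i' \<in> {1..l}. \<exists>j' \<in> {1..l}. ys i' \<in> nbhd E (xs i) \<and> ys j' \<in> nbhd E (xs j) \<and>
        ((i' = j' + 1 \<and> i + 1 \<le> j' \<and> j' \<le> j - 1) \<or>
         (j' = cyc_idx l (i' + 1) \<and> ys i' \<in> seg_vertices ys xs l (j + 1) i
            \<and> ys j' \<in> seg_vertices ys xs l (j + 1) i)))"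

end

theory Submission
  imports Defs
begin

text \<open>Index the vertices y_k by k \<in> {1..l} and let A, B be the indices of the
  neighbours of x_i and x_j on C. Non-crossing says that, for k \<noteq> i, j, an element of B
  inside the arc (i, j] is never followed by one of A, and an element of A outside it is
  never followed by one of B. Exchanging A and B outside the arc turns this into a single
  condition, and the successor map then injects all but two elements of one set into the
  complement of the other in {1..l}; hence |A| + |B| \<le> (l - 2) + 4. Since C alternates
  between the sides of the bipartition, the neighbours of x_i and x_j on C are exactly the
  y_k with k \<in> A resp. B.\<close>

lemma card_Int_add_card_Int_le:
  assumes "inj_on f S" "f ` S \<subseteq> T" "finite T"
    and "\<And>k. k \<in> S \<Longrightarrow> k \<in> A \<Longrightarrow> f k \<notin> B"
  shows "card (A \<inter> S) + card (B \<inter> T) \<le> card T"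
proof -
  have "f ` (A \<inter> S) \<subseteq> T - B" using assms(2,4) by blast
  then have "card (A \<inter> S) \<le> card (T - B)"
    using assms(1,3) by (metis card_image card_mono finite_Diff inj_on_Int)
  also have "\<dots> = card T - card (B \<inter> T)"
    using assms(3) by (simp add: card_Diff_subset_Int Int_commute)
  moreover have "card (B \<inter> T) \<le> card T"
    using assms(3) by (simp add: card_mono)
  ultimately show ?thesis by linarith
qed

lemma card_le_card_Int_add_two:
  assumes "finite A" "A - S \<subseteq> {a, b}"
  shows "card A \<le> card (A \<inter> S) + 2"
proof -
  have "card (A - S) \<le> card {a, b}"
    using assms(2) by (simp add: card_mono)
  also have "\<dots> \<le> 2"
    by (simp add: card_insert_if)
  finally show ?thesis
    using card_Int_Diff[OF assms(1), of S] by linarith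
qed

lemma cyc_idx_eq: "1 \<le> k \<Longrightarrow> k \<le> l \<Longrightarrow> cyc_idx l k = k"
  by (cases k) (auto simp: cyc_idx_def)

lemma cyc_idx_Suc:
  "1 \<le> k \<Longrightarrow> k \<le> l \<Longrightarrow> cyc_idx l (Suc k) = (if k = l then 1 else Suc k)"
  by (auto simp: cyc_idx_def)

lemma inj_on_cyc_idx_Suc: "inj_on (\<lambda>k. cyc_idx l (Suc k)) {1..l}"
  by (auto simp: inj_on_def cyc_idx_Suc)

lemma card_le_if_not_crossing_indices:
  fixes A B :: "nat set"
  assumes "A \<subseteq> {1..l}" "B \<subseteq> {1..l}" "1 \<le> i" "i < j" "j \<le> l"
    and inside: "\<And>k. i < k \<Longrightarrow> k < j \<Longrightarrow> k \<in> B \<Longrightarrow> Suc k \<notin> A"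
    and outside: "\<And>k. k \<in> {1..l} - {i..j} \<Longrightarrow> k \<in> A \<Longrightarrow> cyc_idx l (Suc k) \<notin> B"
  shows "card A + card B \<le> l + 2"
proof -
  define succ where "succ k = cyc_idx l (Suc k)" for k
  define P where "P = {i<..j}"
  define A' where "A' = A \<inter> P \<union> (B - P)"
  define B' where "B' = B \<inter> P \<union> (A - P)"
  define S where "S = {1..l} - {i, j}"
  define T where "T = {1..l} - {succ i, succ j}"
  have fin: "finite A" "finite B"
    using assms(1,2) finite_subset by blast+
  have "card A' = card (A \<inter> P) + card (B - P)"
    unfolding A'_def using fin by (subst card_Un_disjoint) auto
  moreover have "card B' = card (B \<inter> P) + card (A - P)"
    unfolding B'_def using fin by (subst card_Un_disjoint) auto
  ultimately have card_swap: "card A + card B = card A' + card B'"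
    using fin card_Int_Diff[of A P] card_Int_Diff[of B P] by simp
  have succ_inj: "inj_on succ {1..l}"
    using inj_on_cyc_idx_Suc by (simp add: succ_def[abs_def])
  have succ_range: "succ k \<in> {1..l}" if "k \<in> {1..l}" for k
    using that by (simp add: succ_def cyc_idx_Suc)
  have card_T: "card T = l - 2"
  proof -
    have "succ i \<noteq> succ j" using succ_inj assms(3-5) by (auto dest: inj_onD)
    then show ?thesis using succ_range assms(3-5) by (simp add: T_def card_Diff_subset)
  qed
  have "card (B' \<inter> S) + card (A' \<inter> T) \<le> card T"
  proof (rule card_Int_add_card_Int_le)
    show "inj_on succ S" using succ_inj by (rule inj_on_subset) (auto simp: S_def)
    show "succ ` S \<subseteq> T"
      using succ_range succ_inj assms(3-5) by (auto simp: S_def T_def dest: inj_onD)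
    fix k assume "k \<in> S" "k \<in> B'"
    then consider "k \<in> B" "i < k" "k < j" | "k \<in> A" "k \<in> {1..l} - {i..j}"
      by (fastforce simp: S_def B'_def P_def)
    then show "succ k \<notin> A'"
    proof cases
      case 1
      then show ?thesis using inside assms(5) by (auto simp: succ_def cyc_idx_Suc A'_def P_def)
    next
      case 2
      then show ?thesis using outside assms(3) by (auto simp: succ_def cyc_idx_Suc A'_def P_def)
    qed
  qed (simp add: T_def)
  moreover have "card B' \<le> card (B' \<inter> S) + 2"
    using fin assms(1,2)
    by (intro card_le_card_Int_add_two[where a = i and b = j]) (auto simp: B'_def S_def)
  moreover have "card A' \<le> card (A' \<inter> T) + 2"
    using fin assms(1,2)
    by (intro card_le_card_Int_add_two[where a = "succ i" and b = "succ j"])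
      (auto simp: A'_def T_def)
  ultimately show ?thesis
    using card_swap card_T assms(3-5) by linarith
qed

lemma cyc_list_Suc: "cyc_list ys xs (Suc l) = cyc_list ys xs l @ [ys (Suc l), xs (Suc l)]"
  by (simp add: cyc_list_def)

lemma set_cyc_list: "set (cyc_list ys xs l) = ys ` {1..l} \<union> xs ` {1..l}"
  by (auto simp: cyc_list_def)

lemma inj_on_if_distinct_cyc_list: "distinct (cyc_list ys xs l) \<Longrightarrow> inj_on ys {1..l}"
proof (induction l)
  case (Suc l)
  then have "inj_on ys {1..l}" "ys (Suc l) \<notin> ys ` {1..l}"
    by (auto simp: cyc_list_Suc set_cyc_list)
  moreover have "{1..Suc l} = insert (Suc l) {1..l}" by auto
  ultimately show ?case by simp
qed simp

lemma set_cyc_list_Int: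
  assumes "X \<inter> Y = {}" "\<forall>k \<in> {1..l}. xs k \<in> X \<and> ys k \<in> Y"
  shows "set (cyc_list ys xs l) \<inter> Y = ys ` {1..l}"
  using assms by (auto simp: set_cyc_list)

lemma card_nbhd_Int_set_cyc_list:
  assumes "bipartite_graph X Y E" "\<forall>k \<in> {1..l}. xs k \<in> X"
    and "inj_on ys {1..l}" "v \<in> X"
  shows "card (nbhd E v \<inter> set (cyc_list ys xs l)) = card {k \<in> {1..l}. E v (ys k)}"
proof -
  have "nbhd E v \<inter> set (cyc_list ys xs l) = ys ` {k \<in> {1..l}. E v (ys k)}"
    using assms(1,2,4) unfolding bipartite_graph_def nbhd_def set_cyc_list by blast
  moreover have "inj_on ys {k \<in> {1..l}. E v (ys k)}"
    using assms(3) by (rule inj_on_subset) auto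
  ultimately show ?thesis by (simp add: card_image)
qed

lemma cyc_range_Suc_right:
  assumes "1 \<le> i" "i < j" "j \<le> l"
  shows "cyc_range l (Suc j) i = {1..l} - {i<..j}"
  using assms by (auto simp: cyc_range_def cyc_idx_Suc cyc_idx_eq)

lemma not_crossing_inside:
  assumes "\<not> crossing E ys xs l i j" "i < k" "k < j" "j \<le> l" "E (xs j) (ys k)"
  shows "\<not> E (xs i) (ys (Suc k))"
proof
  assume "E (xs i) (ys (Suc k))"
  then have "crossing E ys xs l i j"
    using assms(2-5) unfolding crossing_def
    by (intro bexI[of _ "Suc k"] bexI[of _ k]) (auto simp: nbhd_def)
  with assms(1) show False ..
qed

lemma not_crossing_outside:
  assumes "\<not> crossing E ys xs l i j" "1 \<le> i" "i < j" "j \<le> l"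
    and "k \<in> {1..l} - {i..j}" "E (xs i) (ys k)"
  shows "\<not> E (xs j) (ys (cyc_idx l (Suc k)))"
proof
  assume "E (xs j) (ys (cyc_idx l (Suc k)))"
  moreover have "{k, cyc_idx l (Suc k)} \<subseteq> cyc_range l (j + 1) i"
    using assms(2-5) by (auto simp: cyc_range_Suc_right cyc_idx_Suc)
  ultimately have "crossing E ys xs l i j"
    using assms(5,6) unfolding crossing_def
    by (intro bexI[of _ k] bexI[of _ "cyc_idx l (Suc k)"])
      (auto simp: nbhd_def seg_vertices_def cyc_idx_Suc)
  with assms(1) show False ..
qed

theorem lemma1:
  fixes X Y :: "'a set" and E :: "'a \<Rightarrow> 'a \<Rightarrow> bool"
    and n m \<delta> l i j :: nat and ys xs :: "nat \<Rightarrow> 'a" and x :: 'a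
  assumes "bipartite_graph X Y E"
    and "card X = n" and "n \<ge> 2" and "card Y = m"
    and "\<forall>v \<in> X. card (nbhd E v) \<ge> \<delta>"
    and "tight_pair X E (cyc_list ys xs l) x"
    and "\<forall>k \<in> {1..l}. xs k \<in> X \<and> ys k \<in> Y"
    and "1 \<le> i" and "i < j" and "j \<le> l"
    and "\<not> crossing E ys xs l i j"
  shows "card (nbhd E (xs i) \<inter> set (cyc_list ys xs l))
         + card (nbhd E (xs j) \<inter> set (cyc_list ys xs l))
         \<le> card (set (cyc_list ys xs l) \<inter> Y) + 2"
proof -
  let ?C = "cyc_list ys xs l"
  define A where "A = {k \<in> {1..l}. E (xs i) (ys k)}"
  define B where "B = {k \<in> {1..l}. E (xs j) (ys k)}"
  have inj: "inj_on ys {1..l}"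
    using assms(6) by (intro inj_on_if_distinct_cyc_list[of ys xs])
      (simp add: tight_pair_def longest_cycle_def is_cycle_def)
  have "card A + card B \<le> l + 2"
  proof (rule card_le_if_not_crossing_indices)
    show "A \<subseteq> {1..l}" "B \<subseteq> {1..l}"
      by (auto simp: A_def B_def)
    show "\<And>k. i < k \<Longrightarrow> k < j \<Longrightarrow> k \<in> B \<Longrightarrow> Suc k \<notin> A"
      using not_crossing_inside[OF assms(11)] assms(10) by (simp add: A_def B_def)
    show "\<And>k. k \<in> {1..l} - {i..j} \<Longrightarrow> k \<in> A \<Longrightarrow> cyc_idx l (Suc k) \<notin> B"
      using not_crossing_outside[OF assms(11,8-10)] by (simp add: A_def B_def)
  qed (use assms(8-10) in auto)
  moreover have "card (nbhd E (xs i) \<inter> set ?C) = card A"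
    and "card (nbhd E (xs j) \<inter> set ?C) = card B"
    using card_nbhd_Int_set_cyc_list[OF assms(1) _ inj] assms(7-10)
    by (simp_all add: A_def B_def)
  moreover have "card (set ?C \<inter> Y) = l"
    using set_cyc_list_Int[of X Y l xs ys] assms(1,7) inj
    by (simp add: bipartite_graph_def card_image)
  ultimately show ?thesis by simp
qed

end
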